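(* Let $I\subseteq\mathfrak{M}$ be an ideal of $P$ and let $\mathrm{GFan}(I)=\{\overline G_1,\dots,\overline G_k\}$. (a) For $i=1,\dots,k$, $\mathrm{sepdim}(P/I)\le n-\#\mathrm{LI}(\overline G_i)$. (b) For $i\in\{1,\dots,k\}$, $\mathrm{sepdim}(P/I)=n-\#\mathrm{LI}(\overline G_i)$ if and only if $\#\mathrm{LI}(\overline G_i)=\max_{1\le j\le k}\#\mathrm{LI}(\overline G_j)$. (c) For $i$ such that $\#\mathrm{LI}(\overline G_i)$ is maximal, the $\mathrm{LI}(\overline G_i)$-separating re-embedding $\Phi:P/I\to\widehat P/(I\cap\widehat P)$ (with $\widehat P=K[X\setminus\mathrm{LI}(\overline G_i)]$) is an optimal separating re-embedding.
   Context: $K$ is a field, $P=K[x_1,\dots,x_n]$, $X=\{x_1,\dots,x_n\}$, $\mathfrak{M}=\langle x_1,\dots,x_n\rangle$. For $f\in P$, $\mathrm{indets}(f)$ is the set of indeterminates dividing some term in the support of $f$. For $f\in\mathfrak{M}$ with nonzero degree-one part, $z$ an indeterminate occurring in that degree-one part, and $c\ne0$ the coefficient of $z$ in $f$, $\mathrm{tail}_z(f)=z-\frac1cf$; $f$ is $z$-separating if $z\notin\mathrm{indets}(\mathrm{tail}_z(f))$. For distinct indeterminates $Z=\{z_1,\dots,z_s\}$, a tuple $(f_1,\dots,f_s)$ of nonzero elements of $\mathfrak{M}$ is coherently $Z$-separating if each $f_i$ is $z_i$-separating and $z_i\notin\mathrm{indets}(f_j)$ for $j\neq i$. If $I$ contains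 such a tuple, the $Z$-separating re-embedding is the $K$-algebra isomorphism $\Phi:P/I\to\widehat P/(I\cap\widehat P)$, $\widehat P=K[X\setminus Z]$, induced by $x\mapsto x$ for $x\notin Z$ and $z_i\mapsto\mathrm{tail}_{z_i}(f_i)$ (it does not depend on the choice of the tuple). It is an optimal separating re-embedding if $\#Z'\le\#Z$ for every $Z'\subseteq X$ such that $I$ contains a coherently $Z'$-separating tuple; the separating embedding dimension is then $\mathrm{sepdim}(P/I)=n-\#Z$. A marked reduced Gröbner basis of $I$ is the set of pairs $\{(\mathrm{LT}_\sigma(g),g)\mid g\in G\}$ for $G$ the reduced $\sigma$-Gröbner basis of $I$ for some term ordering $\sigma$; $\mathrm{GFan}(I)$ is the set of all distinct marked reduced Gröbner bases of $I$; for $\overline G\in\mathrm{GFan}(I)$, $\mathrm{LI}(\overline G)$ is the set of indeterminates $z\in X$ that occur as a marked leading term of some element of $\overline G$. *)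

theory Defs
  imports "HOL-Library.Poly_Mapping"
begin

text \<open>Polynomials in indeterminates x_0,...,x_{n-1} over a field: terms are
  finitely supported exponent vectors nat =>0 nat, polynomials are finitely
  supported maps from terms to coefficients.  The variable set is X = {..<n}.\<close>

type_synonym 'a mpoly = "(nat \<Rightarrow>\<^sub>0 nat) \<Rightarrow>\<^sub>0 'a"

definition var :: "nat \<Rightarrow> 'a::{zero,one} mpoly" where
  "var i = Poly_Mapping.single (Poly_Mapping.single i 1) 1"

definition Pn :: "nat \<Rightarrow> ('a::zero) mpoly set" where
  "Pn n = {f::'a mpoly. \<forall>t\<in>Poly_Mapping.keys f. Poly_Mapping.keys t \<subseteq> {..<n}}"

definition terms_n :: "nat \<Rightarrow> (nat \<Rightarrow>\<^sub>0 nat) set" where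
  "terms_n n = {t::nat \<Rightarrow>\<^sub>0 nat. Poly_Mapping.keys t \<subseteq> {..<n}}"

definition indets :: "('a::zero) mpoly \<Rightarrow> nat set" where
  "indets f = \<Union> (Poly_Mapping.keys ` Poly_Mapping.keys f)"

definition maxideal :: "nat \<Rightarrow> ('a::zero) mpoly set" where
  "maxideal n = {f \<in> Pn n. Poly_Mapping.lookup f 0 = 0}"

definition is_ideal :: "nat \<Rightarrow> ('a::comm_ring_1) mpoly set \<Rightarrow> bool" where
  "is_ideal n I \<longleftrightarrow> I \<subseteq> Pn n \<and> 0 \<in> I \<and> (\<forall>f\<in>I. \<forall>g\<in>I. f + g \<in> I)
     \<and> (\<forall>f\<in>I. \<forall>h\<in>Pn n. h * f \<in> I)"

definition lin_coeff :: "('a::zero) mpoly \<Rightarrow> nat \<Rightarrow> 'a" where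
  "lin_coeff f z = Poly_Mapping.lookup f (Poly_Mapping.single z 1)"

definition tail :: "nat \<Rightarrow> ('a::field) mpoly \<Rightarrow> 'a mpoly" where
  "tail z f = var z - Poly_Mapping.map (\<lambda>a. a / lin_coeff f z) f"

definition z_separating :: "nat \<Rightarrow> ('a::field) mpoly \<Rightarrow> nat \<Rightarrow> bool" where
  "z_separating n f z \<longleftrightarrow> f \<in> maxideal n \<and> z < n \<and> lin_coeff f z \<noteq> 0
     \<and> z \<notin> indets (tail z f)"

definition coherently_separating ::
    "nat \<Rightarrow> nat set \<Rightarrow> (nat \<Rightarrow> ('a::field) mpoly) \<Rightarrow> bool" where
  "coherently_separating n Z F \<longleftrightarrow> Z \<subseteq> {..<n}
     \<and> (\<forall>z\<in>Z. F z \<noteq> 0 \<and> F z \<in> maxideal n \<and> z_separating n (F z) z)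
     \<and> (\<forall>z\<in>Z. \<forall>z'\<in>Z. z \<noteq> z' \<longrightarrow> z \<notin> indets (F z'))"

definition has_sep_tuple :: "nat \<Rightarrow> ('a::field) mpoly set \<Rightarrow> nat set \<Rightarrow> bool" where
  "has_sep_tuple n I Z \<longleftrightarrow> (\<exists>F. coherently_separating n Z F \<and> (\<forall>z\<in>Z. F z \<in> I))"

text \<open>Phi is an optimal separating re-embedding: the Z-separating re-embedding
  exists (I contains a coherently Z-separating tuple) and #Z' <= #Z for every
  Z' for which I contains a coherently Z'-separating tuple.\<close>
definition optimal_sep_reembedding :: "nat \<Rightarrow> ('a::field) mpoly set \<Rightarrow> nat set \<Rightarrow> bool" where
  "optimal_sep_reembedding n I Z \<longleftrightarrow> has_sep_tuple n I Z
     \<and> (\<forall>Z'. Z' \<subseteq> {..<n} \<and> has_sep_tuple n I Z' \<longrightarrow> card Z' \<le> card Z)"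

definition sepdim :: "nat \<Rightarrow> ('a::field) mpoly set \<Rightarrow> nat" where
  "sepdim n I = n - Max {card Z | Z. Z \<subseteq> {..<n} \<and> has_sep_tuple n I Z}"

definition term_ordering ::
    "nat \<Rightarrow> ((nat \<Rightarrow>\<^sub>0 nat) \<Rightarrow> (nat \<Rightarrow>\<^sub>0 nat) \<Rightarrow> bool) \<Rightarrow> bool" where
  "term_ordering n ord \<longleftrightarrow>
     (\<forall>t\<in>terms_n n. ord t t)
   \<and> (\<forall>t\<in>terms_n n. \<forall>u\<in>terms_n n. ord t u \<and> ord u t \<longrightarrow> t = u)
   \<and> (\<forall>t\<in>terms_n n. \<forall>u\<in>terms_n n. \<forall>v\<in>terms_n n. ord t u \<and> ord u v \<longrightarrow> ord t v)
   \<and> (\<forall>t\<in>terms_n n. \<forall>u\<in>terms_n n. ord t u \<or> ord u t)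
   \<and> (\<forall>t\<in>terms_n n. \<forall>u\<in>terms_n n. \<forall>s\<in>terms_n n. ord t u \<longrightarrow> ord (t + s) (u + s))
   \<and> (\<forall>t\<in>terms_n n. ord 0 t)"

definition lt :: "((nat \<Rightarrow>\<^sub>0 nat) \<Rightarrow> (nat \<Rightarrow>\<^sub>0 nat) \<Rightarrow> bool) \<Rightarrow> ('a::zero) mpoly
    \<Rightarrow> (nat \<Rightarrow>\<^sub>0 nat)" where
  "lt ord f = (THE t. t \<in> Poly_Mapping.keys f \<and> (\<forall>u\<in>Poly_Mapping.keys f. ord u t))"

definition lc :: "((nat \<Rightarrow>\<^sub>0 nat) \<Rightarrow> (nat \<Rightarrow>\<^sub>0 nat) \<Rightarrow> bool) \<Rightarrow> ('a::zero) mpoly \<Rightarrow> 'a" where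
  "lc ord f = Poly_Mapping.lookup f (lt ord f)"

definition tdvd :: "(nat \<Rightarrow>\<^sub>0 nat) \<Rightarrow> (nat \<Rightarrow>\<^sub>0 nat) \<Rightarrow> bool" where
  "tdvd t u \<longleftrightarrow> (\<forall>i. Poly_Mapping.lookup t i \<le> Poly_Mapping.lookup u i)"

definition reduced_GB :: "nat \<Rightarrow> ((nat \<Rightarrow>\<^sub>0 nat) \<Rightarrow> (nat \<Rightarrow>\<^sub>0 nat) \<Rightarrow> bool)
    \<Rightarrow> ('a::field) mpoly set \<Rightarrow> 'a mpoly set \<Rightarrow> bool" where
  "reduced_GB n ord I G \<longleftrightarrow> finite G \<and> G \<subseteq> I \<and> 0 \<notin> G
     \<and> (\<forall>f\<in>I. f \<noteq> 0 \<longrightarrow> (\<exists>g\<in>G. tdvd (lt ord g) (lt ord f)))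
     \<and> (\<forall>g\<in>G. lc ord g = 1)
     \<and> (\<forall>g\<in>G. \<forall>h\<in>G. g \<noteq> h \<longrightarrow> (\<forall>t\<in>Poly_Mapping.keys g. \<not> tdvd (lt ord h) t))"

definition GFan :: "nat \<Rightarrow> ('a::field) mpoly set
    \<Rightarrow> ((nat \<Rightarrow>\<^sub>0 nat) \<times> 'a mpoly) set set" where
  "GFan n I = {(\<lambda>g. (lt ord g, g)) ` G | ord G. term_ordering n ord \<and> reduced_GB n ord I G}"

definition LI :: "((nat \<Rightarrow>\<^sub>0 nat) \<times> ('a::zero) mpoly) set \<Rightarrow> nat set" where
  "LI Gb = {z. \<exists>g. (Poly_Mapping.single z 1, g) \<in> Gb}"

end

theory Submission
  imports Defs
begin

text \<open>The elements of a reduced Groebner basis whose marked leading terms are indeterminates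
  form a coherently separating tuple: the indeterminate \<open>z\<close> marking \<open>g\<close> occurs in no other
  term of \<open>g\<close>, since such a term would be divisible by \<open>z\<close> and hence above it, and in no term
  of another basis element, by reducedness.  Conversely, if \<open>I\<close> contains a coherently
  \<open>Z\<close>-separating tuple, then for an ordering that compares degrees in \<open>Z\<close> first each member
  of the tuple has its indeterminate as leading term, so the reduced Groebner basis for this
  ordering marks every element of \<open>Z\<close>.  Hence the maximum of \<open>#LI\<close> over the Groebner fan is
  the largest size of a set carrying a separating tuple, i.e. \<open>n - sepdim(P/I)\<close>.  Reduced
  Groebner bases exist for every term ordering, which is a well-ordering by Dickson's lemma.\<close>

section \<open>Polynomials and terms\<close>

lemma lookup_map_zero:
  "g 0 = 0 \<Longrightarrow> Poly_Mapping.lookup (Poly_Mapping.map g p) k = g (Poly_Mapping.lookup p k)"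
  by (simp add: Poly_Mapping.map.rep_eq when_def)

lemma lookup_const_mult:
  "Poly_Mapping.lookup (Poly_Mapping.single 0 c * f) k = (c::'a::comm_semiring_1) * Poly_Mapping.lookup f k"
  by (simp add: mult_map_scale_conv_mult[symmetric] lookup_map_zero)

lemma lookup_monom_mult_plus:
  "Poly_Mapping.lookup (Poly_Mapping.single t c * (f::'a::comm_semiring_1 mpoly)) (t + v)
    = c * Poly_Mapping.lookup f v"
proof -
  have "(\<lambda>q. c * Poly_Mapping.lookup f q when t + v = t + q) = (\<lambda>q. c * Poly_Mapping.lookup f q when q = v)"
    by (auto simp: when_def)
  then show ?thesis
    by (simp add: lookup_mult lookup_single Sum_any_right_distrib mult_when when_mult when_when conj_commute)
qed

lemma keys_monom_mult:
  "Poly_Mapping.keys (Poly_Mapping.single t c * f) \<subseteq> (+) t ` Poly_Mapping.keys f"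
  using keys_mult[of "Poly_Mapping.single t c" f] by (auto split: if_splits)

lemma terms_n_add: "t \<in> terms_n n \<Longrightarrow> u \<in> terms_n n \<Longrightarrow> t + u \<in> terms_n n"
  unfolding terms_n_def using keys_add[of t u] by blast

lemma terms_n_diff: "t \<in> terms_n n \<Longrightarrow> t - u \<in> terms_n n"
proof -
  have "Poly_Mapping.keys (t - u) \<subseteq> Poly_Mapping.keys t"
    by (auto simp: in_keys_iff lookup_minus)
  then show "t \<in> terms_n n \<Longrightarrow> t - u \<in> terms_n n"
    unfolding terms_n_def by blast
qed

lemma zero_in_terms_n: "0 \<in> terms_n n"
  unfolding terms_n_def by simp

lemma lookup_terms_n_outside: "t \<in> terms_n n \<Longrightarrow> n \<le> i \<Longrightarrow> Poly_Mapping.lookup t i = 0"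
  unfolding terms_n_def by (auto simp: in_keys_iff)

lemma Pn_iff: "f \<in> Pn n \<longleftrightarrow> Poly_Mapping.keys f \<subseteq> terms_n n"
  unfolding Pn_def terms_n_def by blast

lemma keys_Pn: "f \<in> Pn n \<Longrightarrow> t \<in> Poly_Mapping.keys f \<Longrightarrow> t \<in> terms_n n"
  unfolding Pn_iff by blast

lemma Pn_single: "t \<in> terms_n n \<Longrightarrow> Poly_Mapping.single t c \<in> Pn n"
  unfolding Pn_iff by auto

lemma Pn_diff: "f \<in> Pn n \<Longrightarrow> g \<in> Pn n \<Longrightarrow> (f::'a::ab_group_add mpoly) - g \<in> Pn n"
  unfolding Pn_iff using keys_diff[of f g] by blast

lemma Pn_mult: "f \<in> Pn n \<Longrightarrow> g \<in> Pn n \<Longrightarrow> (f::'a::comm_semiring_1 mpoly) * g \<in> Pn n"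
  unfolding Pn_iff using keys_mult[of f g] terms_n_add by blast

lemma ideal_subset_Pn: "is_ideal n I \<Longrightarrow> I \<subseteq> Pn n"
  unfolding is_ideal_def by blast

lemma ideal_zero: "is_ideal n I \<Longrightarrow> 0 \<in> I"
  unfolding is_ideal_def by blast

lemma ideal_add: "is_ideal n I \<Longrightarrow> f \<in> I \<Longrightarrow> g \<in> I \<Longrightarrow> f + g \<in> I"
  unfolding is_ideal_def by blast

lemma ideal_mult: "is_ideal n I \<Longrightarrow> f \<in> I \<Longrightarrow> h \<in> Pn n \<Longrightarrow> h * f \<in> I"
  unfolding is_ideal_def by blast

lemma ideal_const_mult: "is_ideal n I \<Longrightarrow> f \<in> I \<Longrightarrow> Poly_Mapping.single 0 c * f \<in> I"
  by (simp add: ideal_mult Pn_single zero_in_terms_n)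

section \<open>Divisibility of terms\<close>

lemma tdvd_refl: "tdvd t t"
  unfolding tdvd_def by simp

lemma tdvd_trans: "tdvd s t \<Longrightarrow> tdvd t u \<Longrightarrow> tdvd s u"
  unfolding tdvd_def using order_trans by blast

lemma tdvd_diff_add: "tdvd s t \<Longrightarrow> (t - s) + s = t"
  by (rule poly_mapping_eqI) (simp add: lookup_add lookup_minus tdvd_def)

lemma var_tdvd: "z \<in> Poly_Mapping.keys t \<Longrightarrow> tdvd (Poly_Mapping.single z 1) t"
  unfolding tdvd_def by (auto simp: lookup_single when_def in_keys_iff)

lemma tdvd_var:
  assumes "tdvd s (Poly_Mapping.single z 1)" and "s \<noteq> 0"
  shows "s = Poly_Mapping.single z 1"
proof -
  have le: "Poly_Mapping.lookup s i \<le> (if i = z then 1 else 0)" for i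
    using assms(1) unfolding tdvd_def by (metis lookup_single_eq lookup_single_not_eq)
  have "Poly_Mapping.lookup s z \<noteq> 0"
  proof
    assume "Poly_Mapping.lookup s z = 0"
    then have "Poly_Mapping.lookup s i = 0" for i
      using le[of i] by (cases "i = z") auto
    then show False
      using assms(2) poly_mapping_eqI[of s 0] by simp
  qed
  then have "Poly_Mapping.lookup s i = Poly_Mapping.lookup (Poly_Mapping.single z 1) i" for i
    using le[of i] le[of z] by (auto simp: lookup_single when_def)
  then show ?thesis
    by (rule poly_mapping_eqI)
qed

definition degree_in :: "nat set \<Rightarrow> (nat \<Rightarrow>\<^sub>0 nat) \<Rightarrow> nat" where
  "degree_in Z t = (\<Sum>i\<in>Z. Poly_Mapping.lookup t i)"

lemma degree_in_zero: "degree_in Z 0 = 0"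
  unfolding degree_in_def by simp

lemma degree_in_add: "degree_in Z (t + u) = degree_in Z t + degree_in Z u"
  unfolding degree_in_def by (simp add: lookup_add sum.distrib)

lemma tdvd_degree_in_antisym:
  assumes "s \<in> terms_n n" "t \<in> terms_n n" "tdvd s t" "degree_in {..<n} t \<le> degree_in {..<n} s"
  shows "s = t"
proof (rule ccontr)
  assume "s \<noteq> t"
  then obtain i where i: "Poly_Mapping.lookup s i \<noteq> Poly_Mapping.lookup t i"
    using poly_mapping_eqI by metis
  then have "i < n"
    using lookup_terms_n_outside assms(1,2) by (metis not_less)
  moreover have "Poly_Mapping.lookup s i < Poly_Mapping.lookup t i"
    using i assms(3) unfolding tdvd_def by (metis le_neq_implies_less)
  ultimately have "degree_in {..<n} s < degree_in {..<n} t"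
    using assms(3) unfolding degree_in_def tdvd_def by (intro sum_strict_mono_ex1) auto
  then show False
    using assms(4) by simp
qed

text \<open>Dickson's lemma for antichains, by induction on the number of indeterminates in which
  the terms may differ: every other element of the antichain is smaller than a fixed one
  in some coordinate.\<close>

lemma finite_tdvd_antichain_aux:
  assumes "finite V"
    and "\<forall>a\<in>A. \<forall>b\<in>A. \<forall>i. i \<notin> V \<longrightarrow> Poly_Mapping.lookup a i = Poly_Mapping.lookup b i"
    and "\<forall>a\<in>A. \<forall>b\<in>A. tdvd a b \<longrightarrow> a = b"
  shows "finite A"
  using assms
proof (induction "card V" arbitrary: V A rule: less_induct)
  case less
  show ?case
  proof (cases "A = {}")
    case False
    then obtain a where a: "a \<in> A" by blast
    define B where "B i c = {b\<in>A. Poly_Mapping.lookup b i = c}" for i c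
    have "A \<subseteq> insert a (\<Union>i\<in>V. \<Union>c\<in>{..<Poly_Mapping.lookup a i}. B i c)"
    proof
      fix b assume b: "b \<in> A"
      show "b \<in> insert a (\<Union>i\<in>V. \<Union>c\<in>{..<Poly_Mapping.lookup a i}. B i c)"
      proof (cases "b = a")
        case False
        then have "\<not> tdvd a b" using less.prems(3) a b by metis
        then obtain i where i: "Poly_Mapping.lookup b i < Poly_Mapping.lookup a i"
          unfolding tdvd_def by (auto simp: not_le)
        then have "i \<in> V" using less.prems(2) a b by fastforce
        then show ?thesis using i b unfolding B_def by auto
      qed simp
    qed
    moreover have "finite (B i c)" if "i \<in> V" for i c
    proof (rule less.hyps)
      show "card (V - {i}) < card V" using that less.prems(1) by (rule card_Diff1_less[rotated])
    qed (use less.prems in \<open>auto simp: B_def\<close>)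
    ultimately show ?thesis
      using less.prems(1) by (auto intro: finite_subset)
  qed simp
qed

lemma finite_tdvd_antichain:
  assumes "A \<subseteq> terms_n n" and "\<forall>a\<in>A. \<forall>b\<in>A. tdvd a b \<longrightarrow> a = b"
  shows "finite A"
proof (rule finite_tdvd_antichain_aux[of "{..<n}"])
  show "\<forall>a\<in>A. \<forall>b\<in>A. \<forall>i. i \<notin> {..<n} \<longrightarrow> Poly_Mapping.lookup a i = Poly_Mapping.lookup b i"
    using assms(1) lookup_terms_n_outside by (metis lessThan_iff not_less subsetD)
qed (use assms(2) in auto)

definition tdvd_minimal :: "(nat \<Rightarrow>\<^sub>0 nat) set \<Rightarrow> (nat \<Rightarrow>\<^sub>0 nat) set" where
  "tdvd_minimal A = {t \<in> A. \<forall>s\<in>A. tdvd s t \<longrightarrow> s = t}"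

lemma finite_tdvd_minimal: "A \<subseteq> terms_n n \<Longrightarrow> finite (tdvd_minimal A)"
  by (rule finite_tdvd_antichain[of _ n]) (auto simp: tdvd_minimal_def)

lemma tdvd_minimal_below:
  assumes A: "A \<subseteq> terms_n n" and t: "t \<in> A"
  shows "\<exists>m\<in>tdvd_minimal A. tdvd m t"
proof -
  let ?P = "\<lambda>s. s \<in> A \<and> tdvd s t"
  obtain m where m: "?P m" and least: "\<And>s. ?P s \<Longrightarrow> degree_in {..<n} m \<le> degree_in {..<n} s"
    using ex_has_least_nat[of ?P t "degree_in {..<n}"] t tdvd_refl by blast
  have "m \<in> tdvd_minimal A"
    unfolding tdvd_minimal_def
  proof (intro CollectI conjI ballI impI)
    fix s assume "s \<in> A" "tdvd s m"
    then show "s = m"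
      using least[of s] m A tdvd_trans tdvd_degree_in_antisym[of s n m] by blast
  qed (use m in simp)
  then show ?thesis
    using m by blast
qed

section \<open>Term orderings and leading terms\<close>

lemma finite_total_has_greatest:
  assumes "finite A" "A \<noteq> {}"
    and total: "\<And>t u. t \<in> A \<Longrightarrow> u \<in> A \<Longrightarrow> r t u \<or> r u t"
    and trans: "\<And>t u v. t \<in> A \<Longrightarrow> u \<in> A \<Longrightarrow> v \<in> A \<Longrightarrow> r t u \<Longrightarrow> r u v \<Longrightarrow> r t v"
  shows "\<exists>t\<in>A. \<forall>u\<in>A. r u t"
  using assms
proof (induction A rule: finite_ne_induct)
  case (insert x F)
  then obtain t where t: "t \<in> F" "\<forall>u\<in>F. r u t" by blast
  then show ?case
    using insert.prems by (cases "r x t") (blast, metis insertCI insertE)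
qed blast

lemma zero_le_term: "(0::nat \<Rightarrow>\<^sub>0 nat) \<le> t"
proof (cases "t = 0")
  case False
  define k where "k = (LEAST k. Poly_Mapping.lookup t k \<noteq> 0)"
  have "\<exists>k. Poly_Mapping.lookup t k \<noteq> 0"
    using False by (metis lookup_zero poly_mapping_eqI)
  then have "Poly_Mapping.lookup t k \<noteq> 0"
    unfolding k_def by (rule LeastI_ex)
  moreover have "Poly_Mapping.lookup t j = 0" if "j < k" for j
    using not_less_Least[OF that[unfolded k_def]] by simp
  ultimately show ?thesis
    unfolding less_eq_poly_mapping.rep_eq less_fun_def by (auto intro!: exI[of _ k])
qed simp

locale term_order =
  fixes n :: nat and ord :: "(nat \<Rightarrow>\<^sub>0 nat) \<Rightarrow> (nat \<Rightarrow>\<^sub>0 nat) \<Rightarrow> bool"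
  assumes term_ordering: "term_ordering n ord"
begin

lemma ord_refl: "t \<in> terms_n n \<Longrightarrow> ord t t"
  using term_ordering unfolding term_ordering_def by blast

lemma ord_antisym: "t \<in> terms_n n \<Longrightarrow> u \<in> terms_n n \<Longrightarrow> ord t u \<Longrightarrow> ord u t \<Longrightarrow> t = u"
  using term_ordering unfolding term_ordering_def by blast

lemma ord_trans:
  "t \<in> terms_n n \<Longrightarrow> u \<in> terms_n n \<Longrightarrow> v \<in> terms_n n \<Longrightarrow> ord t u \<Longrightarrow> ord u v \<Longrightarrow> ord t v"
  using term_ordering unfolding term_ordering_def by blast

lemma ord_total: "t \<in> terms_n n \<Longrightarrow> u \<in> terms_n n \<Longrightarrow> ord t u \<or> ord u t"
  using term_ordering unfolding term_ordering_def by blast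

lemma ord_add_right:
  "t \<in> terms_n n \<Longrightarrow> u \<in> terms_n n \<Longrightarrow> s \<in> terms_n n \<Longrightarrow> ord t u \<Longrightarrow> ord (t + s) (u + s)"
  using term_ordering unfolding term_ordering_def by blast

lemma ord_zero: "t \<in> terms_n n \<Longrightarrow> ord 0 t"
  using term_ordering unfolding term_ordering_def by blast

lemma tdvd_imp_ord:
  assumes "s \<in> terms_n n" "t \<in> terms_n n" "tdvd s t"
  shows "ord s t"
  using ord_add_right[of 0 "t - s" s] ord_zero terms_n_diff zero_in_terms_n assms
    tdvd_diff_add[OF assms(3)] by simp

lemma finite_has_greatest: "finite A \<Longrightarrow> A \<noteq> {} \<Longrightarrow> A \<subseteq> terms_n n \<Longrightarrow> \<exists>t\<in>A. \<forall>u\<in>A. ord u t"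
  by (rule finite_total_has_greatest) (use ord_total ord_trans in blast)+

lemma finite_has_least: "finite A \<Longrightarrow> A \<noteq> {} \<Longrightarrow> A \<subseteq> terms_n n \<Longrightarrow> \<exists>t\<in>A. \<forall>u\<in>A. ord t u"
  by (rule finite_total_has_greatest) (use ord_total ord_trans in blast)+

text \<open>Every term ordering is a well-ordering: among the finitely many divisibility-minimal
  elements of a set of terms, the least one is below every element of the set.\<close>

lemma wf_ord_strict: "wf {(u, t). u \<in> terms_n n \<and> t \<in> terms_n n \<and> ord u t \<and> u \<noteq> t}"
proof (rule wfI_min)
  fix x :: "nat \<Rightarrow>\<^sub>0 nat" and Q assume x: "x \<in> Q"
  let ?A = "Q \<inter> terms_n n"
  show "\<exists>m\<in>Q. \<forall>y. (y, m) \<in> {(u, t). u \<in> terms_n n \<and> t \<in> terms_n n \<and> ord u t \<and> u \<noteq> t} \<longrightarrow> y \<notin> Q"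
  proof (cases "?A = {}")
    case False
    then have "tdvd_minimal ?A \<noteq> {}"
      using tdvd_minimal_below[of ?A n] by blast
    moreover have "finite (tdvd_minimal ?A)"
      by (rule finite_tdvd_minimal) blast
    ultimately obtain m where m: "m \<in> tdvd_minimal ?A" and least: "\<forall>m'\<in>tdvd_minimal ?A. ord m m'"
      using finite_has_least[of "tdvd_minimal ?A"] by (auto simp: tdvd_minimal_def)
    have "y \<notin> Q" if y: "y \<in> terms_n n" "ord y m" "y \<noteq> m" for y
    proof
      assume "y \<in> Q"
      then obtain m' where "m' \<in> tdvd_minimal ?A" "tdvd m' y"
        using tdvd_minimal_below[OF Int_lower2, of y Q n] y(1) by blast
      then have "ord m y"
        using least m y(1) tdvd_imp_ord ord_trans unfolding tdvd_minimal_def by blast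
      then show False
        using ord_antisym y m unfolding tdvd_minimal_def by blast
    qed
    then show ?thesis
      using m unfolding tdvd_minimal_def by blast
  qed (use x in blast)
qed

lemma lt_eqI:
  assumes "f \<in> Pn n" "t \<in> Poly_Mapping.keys f" "\<forall>u\<in>Poly_Mapping.keys f. ord u t"
  shows "lt ord f = t"
  unfolding lt_def
proof (rule the_equality)
  fix t' assume "t' \<in> Poly_Mapping.keys f \<and> (\<forall>u\<in>Poly_Mapping.keys f. ord u t')"
  then show "t' = t"
    using ord_antisym[of t' t] keys_Pn assms by blast
qed (use assms in blast)

lemma lt_greatest_key:
  assumes "f \<in> Pn n" "f \<noteq> 0"
  shows "lt ord f \<in> Poly_Mapping.keys f \<and> (\<forall>u\<in>Poly_Mapping.keys f. ord u (lt ord f))"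
proof -
  obtain t where "t \<in> Poly_Mapping.keys f" "\<forall>u\<in>Poly_Mapping.keys f. ord u t"
    using finite_has_greatest[of "Poly_Mapping.keys f"] assms keys_Pn by auto
  then show ?thesis
    using lt_eqI[OF assms(1)] by simp
qed

lemma lt_monom_mult:
  fixes f :: "'a::comm_semiring_1 mpoly"
  assumes f: "f \<in> Pn n" "f \<noteq> 0" and v: "v \<in> terms_n n"
  shows "Poly_Mapping.single v 1 * f \<noteq> 0 \<and> lt ord (Poly_Mapping.single v 1 * f) = v + lt ord f"
proof -
  let ?h = "Poly_Mapping.single v 1 * f"
  have lt_f: "lt ord f \<in> Poly_Mapping.keys f" "\<forall>u\<in>Poly_Mapping.keys f. ord u (lt ord f)"
    using lt_greatest_key[OF f] by auto
  then have key: "v + lt ord f \<in> Poly_Mapping.keys ?h"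
    using lookup_monom_mult_plus[of v 1 f "lt ord f"] by (simp add: in_keys_iff)
  have "ord u (v + lt ord f)" if u: "u \<in> Poly_Mapping.keys ?h" for u
  proof -
    obtain w where "w \<in> Poly_Mapping.keys f" "u = v + w"
      using u keys_monom_mult by blast
    then show ?thesis
      using ord_add_right[of w "lt ord f" v] lt_f keys_Pn[OF f(1)] v by (simp add: add.commute)
  qed
  then show ?thesis
    using lt_eqI[OF Pn_mult[OF Pn_single[OF v] f(1)] key] key by auto
qed

end

section \<open>Existence of reduced Groebner bases\<close>

definition lead_terms ::
    "((nat \<Rightarrow>\<^sub>0 nat) \<Rightarrow> (nat \<Rightarrow>\<^sub>0 nat) \<Rightarrow> bool) \<Rightarrow> 'a::zero mpoly set \<Rightarrow> (nat \<Rightarrow>\<^sub>0 nat) set" where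
  "lead_terms ord I = {lt ord f | f. f \<in> I \<and> f \<noteq> 0}"

text \<open>The last condition says that reduction never creates terms above those of \<open>f\<close>;
  it makes \<open>t\<close> the leading term of \<open>t - r\<close> when \<open>r\<close> is a normal form of \<open>t\<close>.\<close>

definition normal_form ::
    "nat \<Rightarrow> ((nat \<Rightarrow>\<^sub>0 nat) \<Rightarrow> (nat \<Rightarrow>\<^sub>0 nat) \<Rightarrow> bool) \<Rightarrow> 'a::field mpoly set
      \<Rightarrow> 'a mpoly \<Rightarrow> 'a mpoly \<Rightarrow> bool" where
  "normal_form n ord I f r \<longleftrightarrow> r \<in> Pn n \<and> f - r \<in> I
     \<and> Poly_Mapping.keys r \<inter> lead_terms ord I = {}
     \<and> (\<forall>u\<in>Poly_Mapping.keys r. \<exists>v\<in>Poly_Mapping.keys f. ord u v)"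

locale ideal_term_order = term_order +
  fixes I :: "'a::field mpoly set"
  assumes ideal: "is_ideal n I"
begin

lemma lead_terms_in_terms_n:
  assumes "t \<in> lead_terms ord I"
  shows "t \<in> terms_n n"
proof -
  obtain f where f: "f \<in> I" "f \<noteq> 0" "t = lt ord f"
    using assms unfolding lead_terms_def by blast
  then have "f \<in> Pn n"
    using ideal_subset_Pn[OF ideal] by blast
  then show ?thesis
    using lt_greatest_key[of f] keys_Pn f by blast
qed

lemma lead_termsI: "f \<in> I \<Longrightarrow> f \<noteq> 0 \<Longrightarrow> lt ord f \<in> lead_terms ord I"
  unfolding lead_terms_def by blast

lemma lead_terms_tdvd_closed:
  assumes t: "t \<in> lead_terms ord I" and u: "u \<in> terms_n n" and dvd: "tdvd t u"
  shows "u \<in> lead_terms ord I"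
proof -
  obtain f where f: "f \<in> I" "f \<noteq> 0" "t = lt ord f"
    using t unfolding lead_terms_def by blast
  let ?h = "Poly_Mapping.single (u - t) 1 * f"
  have "?h \<in> I"
    using ideal_mult[OF ideal f(1) Pn_single[OF terms_n_diff[OF u]]] .
  moreover have "?h \<noteq> 0" "lt ord ?h = u"
    using lt_monom_mult[of f "u - t"] f ideal_subset_Pn[OF ideal] terms_n_diff[OF u]
      tdvd_diff_add[OF dvd] by auto
  ultimately show ?thesis
    using lead_termsI by metis
qed

lemma reduce_greatest_lead_term:
  assumes f: "f \<in> Pn n" and m: "m \<in> Poly_Mapping.keys f \<inter> lead_terms ord I"
    and greatest: "\<forall>u\<in>Poly_Mapping.keys f \<inter> lead_terms ord I. ord u m"
  obtains f' where "f' \<in> Pn n" "f - f' \<in> I"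
    "\<forall>u\<in>Poly_Mapping.keys f' \<inter> lead_terms ord I. ord u m \<and> u \<noteq> m"
    "\<forall>u\<in>Poly_Mapping.keys f'. \<exists>v\<in>Poly_Mapping.keys f. ord u v"
proof -
  obtain h where h: "h \<in> I" "h \<noteq> 0" "m = lt ord h"
    using m unfolding lead_terms_def by blast
  have hP: "h \<in> Pn n"
    using h(1) ideal_subset_Pn[OF ideal] by blast
  have lt_h: "m \<in> Poly_Mapping.keys h" "\<forall>u\<in>Poly_Mapping.keys h. ord u m"
    using lt_greatest_key[OF hP h(2)] h(3) by auto
  define c where "c = Poly_Mapping.lookup f m / Poly_Mapping.lookup h m"
  define f' where "f' = f - Poly_Mapping.single 0 c * h"
  have ch: "Poly_Mapping.single 0 c * h \<in> I"
    using ideal_const_mult[OF ideal h(1)] .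
  have lookup_f': "Poly_Mapping.lookup f' u = Poly_Mapping.lookup f u - c * Poly_Mapping.lookup h u" for u
    unfolding f'_def by (simp add: lookup_minus lookup_const_mult)
  have "m \<notin> Poly_Mapping.keys f'"
    using lookup_f'[of m] lt_h(1) unfolding c_def by (simp add: in_keys_iff)
  moreover have keys_f': "u \<in> Poly_Mapping.keys f \<or> u \<in> Poly_Mapping.keys h"
    if "u \<in> Poly_Mapping.keys f'" for u
    using that lookup_f'[of u] by (auto simp: in_keys_iff)
  ultimately have "\<forall>u\<in>Poly_Mapping.keys f' \<inter> lead_terms ord I. ord u m \<and> u \<noteq> m"
    using greatest lt_h(2) by blast
  moreover have "\<forall>u\<in>Poly_Mapping.keys f'. \<exists>v\<in>Poly_Mapping.keys f. ord u v"
    using keys_f' lt_h(2) m ord_refl keys_Pn[OF f] by blast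
  moreover have "f' \<in> Pn n"
    unfolding f'_def using Pn_diff[OF f] ch ideal_subset_Pn[OF ideal] by blast
  moreover have "f - f' \<in> I"
    unfolding f'_def using ch by simp
  ultimately show thesis
    using that by blast
qed

lemma normal_form_self:
  "f \<in> Pn n \<Longrightarrow> Poly_Mapping.keys f \<inter> lead_terms ord I = {} \<Longrightarrow> normal_form n ord I f f"
  unfolding normal_form_def using ideal_zero[OF ideal] ord_refl keys_Pn by fastforce

lemma normal_form_trans:
  assumes f: "f \<in> Pn n" and f': "f' \<in> Pn n" and "f - f' \<in> I"
    and below: "\<forall>u\<in>Poly_Mapping.keys f'. \<exists>v\<in>Poly_Mapping.keys f. ord u v"
    and r: "normal_form n ord I f' r"
  shows "normal_form n ord I f r"
proof -
  have "f' - r \<in> I"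
    using r unfolding normal_form_def by blast
  then have "(f - f') + (f' - r) \<in> I"
    using ideal_add[OF ideal assms(3)] by blast
  then have "f - r \<in> I"
    by simp
  moreover have "\<exists>w\<in>Poly_Mapping.keys f. ord u w" if u: "u \<in> Poly_Mapping.keys r" for u
  proof -
    obtain v where v: "v \<in> Poly_Mapping.keys f'" "ord u v"
      using r u unfolding normal_form_def by blast
    obtain w where w: "w \<in> Poly_Mapping.keys f" "ord v w"
      using below v(1) by blast
    have "u \<in> terms_n n"
      using r u keys_Pn unfolding normal_form_def by blast
    then show ?thesis
      using ord_trans v w keys_Pn f f' by blast
  qed
  ultimately show ?thesis
    using r unfolding normal_form_def by blast
qed

lemma normal_form_exists:
  assumes f: "f \<in> Pn n"
  shows "\<exists>r. normal_form n ord I f r"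
proof -
  let ?NS = "\<lambda>f. Poly_Mapping.keys f \<inter> lead_terms ord I"
  let ?below = "\<lambda>m. \<forall>f\<in>Pn n. (\<forall>u\<in>?NS f. ord u m \<and> u \<noteq> m) \<longrightarrow> (\<exists>r. normal_form n ord I f r)"
  have step: "\<exists>r. normal_form n ord I f r"
    if f: "f \<in> Pn n" and "?NS f \<noteq> {}" and IH: "\<And>m. m \<in> ?NS f \<Longrightarrow> ?below m"
    for f :: "'a mpoly"
  proof -
    obtain m where m: "m \<in> ?NS f" "\<forall>u\<in>?NS f. ord u m"
      using finite_has_greatest[of "?NS f"] \<open>?NS f \<noteq> {}\<close> keys_Pn[OF f] by auto
    obtain f' where f': "f' \<in> Pn n" "f - f' \<in> I" "\<forall>u\<in>?NS f'. ord u m \<and> u \<noteq> m"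
      "\<forall>u\<in>Poly_Mapping.keys f'. \<exists>v\<in>Poly_Mapping.keys f. ord u v"
      using reduce_greatest_lead_term[OF f m] .
    have "\<exists>r. normal_form n ord I f' r"
      using IH[OF m(1)] f'(1,3) by blast
    then show ?thesis
      using normal_form_trans[OF f f'(1,2,4)] by blast
  qed
  have "?below m" if "m \<in> terms_n n" for m
    using that
  proof (induction m rule: wf_induct[OF wf_ord_strict])
    case (1 m)
    show ?case
    proof (intro ballI impI)
      fix f :: "'a mpoly" assume f: "f \<in> Pn n" and below_m: "\<forall>u\<in>?NS f. ord u m \<and> u \<noteq> m"
      show "\<exists>r. normal_form n ord I f r"
      proof (cases "?NS f = {}")
        case False
        show ?thesis
        proof (rule step[OF f False])
          fix m' assume m': "m' \<in> ?NS f"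
          then have "m' \<in> terms_n n"
            using keys_Pn[OF f] by blast
          moreover have "ord m' m" "m' \<noteq> m"
            using below_m m' by auto
          ultimately show "?below m'"
            using "1.IH" "1.prems" by simp
        qed
      qed (use normal_form_self f in blast)
    qed
  qed
  then show ?thesis
    using step[OF f] normal_form_self[OF f] keys_Pn[OF f] by blast
qed

lemma generator_of_lead_term:
  assumes m: "m \<in> lead_terms ord I" and r: "normal_form n ord I (Poly_Mapping.single m 1) r"
  defines "g \<equiv> Poly_Mapping.single m 1 - r"
  shows "g \<in> I" "lt ord g = m" "lc ord g = 1"
    "\<forall>t\<in>Poly_Mapping.keys g. t \<noteq> m \<longrightarrow> t \<notin> lead_terms ord I"
proof -
  have lookup_g: "Poly_Mapping.lookup g t = (if t = m then 1 else 0) - Poly_Mapping.lookup r t" for t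
    unfolding g_def by (simp add: lookup_minus lookup_single)
  have "m \<notin> Poly_Mapping.keys r"
    using r m unfolding normal_form_def by blast
  then have gm: "Poly_Mapping.lookup g m = 1"
    using lookup_g[of m] by (simp add: in_keys_iff)
  have keys_g: "t \<in> Poly_Mapping.keys r" if "t \<in> Poly_Mapping.keys g" "t \<noteq> m" for t
    using that lookup_g[of t] by (simp add: in_keys_iff)
  show "g \<in> I"
    using r unfolding normal_form_def g_def by blast
  then have "g \<in> Pn n"
    using ideal_subset_Pn[OF ideal] by blast
  moreover have "m \<in> Poly_Mapping.keys g"
    using gm by (simp add: in_keys_iff)
  moreover have "\<forall>t\<in>Poly_Mapping.keys g. ord t m"
    using keys_g r ord_refl lead_terms_in_terms_n[OF m] unfolding normal_form_def by fastforce
  ultimately show lt_g: "lt ord g = m"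
    by (rule lt_eqI)
  show "lc ord g = 1"
    unfolding lc_def lt_g using gm .
  show "\<forall>t\<in>Poly_Mapping.keys g. t \<noteq> m \<longrightarrow> t \<notin> lead_terms ord I"
    using keys_g r unfolding normal_form_def by blast
qed

lemma minimal_lead_term_not_tdvd_key:
  assumes m: "m \<in> tdvd_minimal (lead_terms ord I)" "m' \<in> tdvd_minimal (lead_terms ord I)" "m \<noteq> m'"
    and g: "g \<in> Pn n" "\<forall>t\<in>Poly_Mapping.keys g. t \<noteq> m \<longrightarrow> t \<notin> lead_terms ord I"
    and t: "t \<in> Poly_Mapping.keys g"
  shows "\<not> tdvd m' t"
proof
  assume dvd: "tdvd m' t"
  show False
  proof (cases "t = m")
    case True
    then show False
      using dvd m unfolding tdvd_minimal_def by blast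
  next
    case False
    have "t \<in> lead_terms ord I"
      using lead_terms_tdvd_closed[OF _ keys_Pn[OF g(1) t] dvd] m(2)
      unfolding tdvd_minimal_def by blast
    then show False
      using g(2) t False by blast
  qed
qed

lemma reduced_GB_of_generators:
  assumes g: "\<And>m. m \<in> tdvd_minimal (lead_terms ord I) \<Longrightarrow>
    g m \<in> I \<and> lt ord (g m) = m \<and> lc ord (g m) = 1
    \<and> (\<forall>t\<in>Poly_Mapping.keys (g m). t \<noteq> m \<longrightarrow> t \<notin> lead_terms ord I)"
  shows "reduced_GB n ord I (g ` tdvd_minimal (lead_terms ord I))"
  unfolding reduced_GB_def
proof (intro conjI ballI impI)
  let ?M = "tdvd_minimal (lead_terms ord I)"
  have lead_terms_n: "lead_terms ord I \<subseteq> terms_n n"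
    using lead_terms_in_terms_n by blast
  show "finite (g ` ?M)"
    using finite_tdvd_minimal[OF lead_terms_n] by blast
  show "g ` ?M \<subseteq> I" "\<And>h. h \<in> g ` ?M \<Longrightarrow> lc ord h = 1"
    using g by auto
  show "0 \<notin> g ` ?M"
    using g by (fastforce simp: lc_def)
  show "\<exists>h\<in>g ` ?M. tdvd (lt ord h) (lt ord f)" if f: "f \<in> I" "f \<noteq> 0" for f
  proof -
    obtain m where "m \<in> ?M" "tdvd m (lt ord f)"
      using tdvd_minimal_below[OF lead_terms_n lead_termsI[OF f]] by blast
    then have "tdvd (lt ord (g m)) (lt ord f)" "g m \<in> g ` ?M"
      using g by auto
    then show ?thesis
      by blast
  qed
  show "\<not> tdvd (lt ord h') t"
    if h: "h \<in> g ` ?M" "h' \<in> g ` ?M" "h \<noteq> h'" "t \<in> Poly_Mapping.keys h" for h h' t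
  proof -
    obtain m m' where m: "m \<in> ?M" "m' \<in> ?M" "h = g m" "h' = g m'"
      using h(1,2) by blast
    then have "m \<noteq> m'"
      using h(3) by blast
    moreover have "g m \<in> Pn n"
      using g[OF m(1)] ideal_subset_Pn[OF ideal] by blast
    ultimately have "\<not> tdvd m' t"
      using minimal_lead_term_not_tdvd_key[OF m(1,2)] g[OF m(1)] h(4) m(3) by blast
    then show ?thesis
      using g[OF m(2)] m(4) by simp
  qed
qed

lemma reduced_GB_exists: "\<exists>G. reduced_GB n ord I G"
proof -
  have "\<exists>g. g \<in> I \<and> lt ord g = m \<and> lc ord g = 1
      \<and> (\<forall>t\<in>Poly_Mapping.keys g. t \<noteq> m \<longrightarrow> t \<notin> lead_terms ord I)"
    if "m \<in> tdvd_minimal (lead_terms ord I)" for m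
  proof -
    have m: "m \<in> lead_terms ord I"
      using that by (simp add: tdvd_minimal_def)
    obtain r where "normal_form n ord I (Poly_Mapping.single m 1) r"
      using normal_form_exists[OF Pn_single[OF lead_terms_in_terms_n[OF m]]] by blast
    from generator_of_lead_term[OF m this] show ?thesis
      by blast
  qed
  then obtain g where "\<And>m. m \<in> tdvd_minimal (lead_terms ord I) \<Longrightarrow>
      g m \<in> I \<and> lt ord (g m) = m \<and> lc ord (g m) = 1
      \<and> (\<forall>t\<in>Poly_Mapping.keys (g m). t \<noteq> m \<longrightarrow> t \<notin> lead_terms ord I)"
    by metis
  then show ?thesis
    using reduced_GB_of_generators by blast
qed

end

section \<open>Separating tuples from Groebner bases and back\<close>

lemma lookup_tail:
  "Poly_Mapping.lookup (tail z f) u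
    = (if u = Poly_Mapping.single z 1 then 1 else 0) - Poly_Mapping.lookup f u / lin_coeff f z"
  unfolding tail_def var_def by (simp add: lookup_minus lookup_map_zero lookup_single when_def)

lemma indetsI: "u \<in> Poly_Mapping.keys f \<Longrightarrow> i \<in> Poly_Mapping.keys u \<Longrightarrow> i \<in> indets f"
  unfolding indets_def by blast

lemma has_sep_tuple_subset: "has_sep_tuple n I Z \<Longrightarrow> Z \<subseteq> {..<n}"
  unfolding has_sep_tuple_def coherently_separating_def by blast

lemma reduced_GB_var_separating:
  assumes ord: "term_ordering n ord" and ideal: "is_ideal n I" and maximal: "I \<subseteq> maxideal n"
    and G: "reduced_GB n ord I G" and g: "g \<in> G" and lt_g: "lt ord g = Poly_Mapping.single z 1"
  shows "z_separating n g z"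
proof -
  interpret term_order n ord
    by (rule term_order.intro) (rule ord)
  have gI: "g \<in> I" and g0: "g \<noteq> 0" and lc_g: "lc ord g = 1"
    using G g unfolding reduced_GB_def by auto
  have gP: "g \<in> Pn n"
    using gI ideal_subset_Pn[OF ideal] by blast
  have var_key: "Poly_Mapping.single z 1 \<in> Poly_Mapping.keys g"
    and var_greatest: "\<forall>u\<in>Poly_Mapping.keys g. ord u (Poly_Mapping.single z 1)"
    using lt_greatest_key[OF gP g0] lt_g by auto
  have var_term: "Poly_Mapping.single z 1 \<in> terms_n n"
    using keys_Pn[OF gP var_key] .
  have coeff: "lin_coeff g z = 1"
    using lc_g lt_g unfolding lc_def lin_coeff_def by simp
  have "z \<notin> Poly_Mapping.keys u" if u: "u \<in> Poly_Mapping.keys g" "u \<noteq> Poly_Mapping.single z 1" for u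
  proof
    assume "z \<in> Poly_Mapping.keys u"
    then have "ord (Poly_Mapping.single z 1) u"
      using tdvd_imp_ord[OF var_term keys_Pn[OF gP u(1)] var_tdvd] by blast
    then show False
      using ord_antisym[OF keys_Pn[OF gP u(1)] var_term] var_greatest u by blast
  qed
  then have "z \<notin> indets (tail z g)"
    unfolding indets_def using coeff by (auto simp: in_keys_iff lookup_tail lin_coeff_def split: if_splits)
  moreover have "z < n"
    using var_term unfolding terms_n_def by simp
  ultimately show ?thesis
    unfolding z_separating_def using coeff gI maximal by auto
qed

lemma GFanE:
  assumes "Gb \<in> GFan n I"
  obtains ord G where "term_ordering n ord" "reduced_GB n ord I G"
    "LI Gb = {z. \<exists>g\<in>G. lt ord g = Poly_Mapping.single z 1}"
proof -
  obtain ord G where "term_ordering n ord" "reduced_GB n ord I G" "Gb = (\<lambda>g. (lt ord g, g)) ` G"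
    using assms unfolding GFan_def by blast
  moreover have "LI Gb = {z. \<exists>g\<in>G. lt ord g = Poly_Mapping.single z 1}"
    unfolding LI_def calculation(3) by force
  ultimately show thesis
    using that by blast
qed

lemma has_sep_tuple_LI:
  assumes ideal: "is_ideal n I" and maximal: "I \<subseteq> maxideal n" and Gb: "Gb \<in> GFan n I"
  shows "has_sep_tuple n I (LI Gb)"
proof -
  obtain ord G where ord: "term_ordering n ord" and G: "reduced_GB n ord I G"
    and LI_eq: "LI Gb = {z. \<exists>g\<in>G. lt ord g = Poly_Mapping.single z 1}"
    using GFanE[OF Gb] .
  define F where "F z = (SOME g. g \<in> G \<and> lt ord g = Poly_Mapping.single z 1)" for z
  have F: "F z \<in> G" "lt ord (F z) = Poly_Mapping.single z 1" if "z \<in> LI Gb" for z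
    using someI_ex[of "\<lambda>g. g \<in> G \<and> lt ord g = Poly_Mapping.single z 1"] that
    unfolding F_def LI_eq by blast+
  have sep: "z_separating n (F z) z" if "z \<in> LI Gb" for z
    using reduced_GB_var_separating[OF ord ideal maximal G] F[OF that] .
  have "z \<notin> indets (F z')" if "z \<in> LI Gb" "z' \<in> LI Gb" "z \<noteq> z'" for z z'
  proof
    assume "z \<in> indets (F z')"
    then obtain u where u: "u \<in> Poly_Mapping.keys (F z')" "z \<in> Poly_Mapping.keys u"
      unfolding indets_def by blast
    have "F z' \<noteq> F z"
      using F that by (metis lookup_single_eq lookup_single_not_eq zero_neq_one)
    then have "\<not> tdvd (lt ord (F z)) u"
      using G F that u(1) unfolding reduced_GB_def by blast
    then show False
      using F(2)[OF that(1)] var_tdvd[OF u(2)] by simp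
  qed
  moreover have "F z \<noteq> 0" "F z \<in> I" if "z \<in> LI Gb" for z
    using G F[OF that] unfolding reduced_GB_def by auto
  ultimately have "coherently_separating n (LI Gb) F"
    unfolding coherently_separating_def using sep maximal by (auto simp: z_separating_def)
  then show ?thesis
    unfolding has_sep_tuple_def using \<open>\<And>z. z \<in> LI Gb \<Longrightarrow> F z \<in> I\<close> by blast
qed

definition elim_ord :: "nat set \<Rightarrow> (nat \<Rightarrow>\<^sub>0 nat) \<Rightarrow> (nat \<Rightarrow>\<^sub>0 nat) \<Rightarrow> bool" where
  "elim_ord Z t u \<longleftrightarrow> degree_in Z t < degree_in Z u \<or> (degree_in Z t = degree_in Z u \<and> t \<le> u)"

lemma term_ordering_elim_ord: "term_ordering n (elim_ord Z)"
  unfolding term_ordering_def elim_ord_def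
  by (auto simp: degree_in_add degree_in_zero zero_le_term intro: add_right_mono)

lemma lt_elim_ord_separating:
  assumes F: "coherently_separating n Z F" and z: "z \<in> Z"
  shows "lt (elim_ord Z) (F z) = Poly_Mapping.single z 1"
proof -
  interpret term_order n "elim_ord Z"
    by (rule term_order.intro) (rule term_ordering_elim_ord)
  let ?f = "F z" and ?z = "Poly_Mapping.single z (1::nat)"
  have sep: "z_separating n ?f z" and others: "\<forall>z'\<in>Z. z' \<noteq> z \<longrightarrow> z' \<notin> indets ?f"
    and "finite Z"
    using F z unfolding coherently_separating_def by (auto intro: finite_subset)
  have fP: "?f \<in> Pn n" and coeff: "lin_coeff ?f z \<noteq> 0" and tail: "z \<notin> indets (tail z ?f)"
    using sep unfolding z_separating_def maxideal_def by auto
  have "degree_in Z u = 0" if u: "u \<in> Poly_Mapping.keys ?f" "u \<noteq> ?z" for u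
  proof -
    have "u \<in> Poly_Mapping.keys (tail z ?f)"
      using u coeff by (simp add: lookup_tail in_keys_iff)
    then have "i \<notin> Poly_Mapping.keys u" if "i \<in> Z" for i
      using others tail u(1) that indetsI by metis
    then show ?thesis
      unfolding degree_in_def by (simp add: in_keys_iff)
  qed
  moreover have "degree_in Z ?z = 1"
    unfolding degree_in_def using \<open>finite Z\<close> z by (simp add: lookup_single when_def)
  moreover have "?z \<in> Poly_Mapping.keys ?f"
    using coeff unfolding lin_coeff_def by (simp add: in_keys_iff)
  ultimately have "elim_ord Z u ?z" if "u \<in> Poly_Mapping.keys ?f" for u
    using ord_refl keys_Pn[OF fP that] that unfolding elim_ord_def by (cases "u = ?z") auto
  then show ?thesis
    using lt_eqI[OF fP \<open>?z \<in> Poly_Mapping.keys ?f\<close>] by blast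
qed

lemma GFan_LI_superset:
  assumes ideal: "is_ideal n I" and maximal: "I \<subseteq> maxideal n" and Z: "has_sep_tuple n I Z"
  shows "\<exists>Gb\<in>GFan n I. Z \<subseteq> LI Gb"
proof -
  interpret ideal_term_order n "elim_ord Z" I
    by (intro ideal_term_order.intro term_order.intro term_ordering_elim_ord ideal_term_order_axioms.intro ideal)
  obtain F where F: "coherently_separating n Z F" and FI: "\<forall>z\<in>Z. F z \<in> I"
    using Z unfolding has_sep_tuple_def by blast
  obtain G where G: "reduced_GB n (elim_ord Z) I G"
    using reduced_GB_exists by blast
  have "z \<in> LI ((\<lambda>g. (lt (elim_ord Z) g, g)) ` G)" if z: "z \<in> Z" for z
  proof -
    have "F z \<noteq> 0"
      using F z unfolding coherently_separating_def by blast
    moreover have "\<forall>f\<in>I. f \<noteq> 0 \<longrightarrow> (\<exists>g\<in>G. tdvd (lt (elim_ord Z) g) (lt (elim_ord Z) f))"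
      using G unfolding reduced_GB_def by blast
    ultimately obtain g where g: "g \<in> G" "tdvd (lt (elim_ord Z) g) (Poly_Mapping.single z 1)"
      using FI z lt_elim_ord_separating[OF F z] by force
    have "g \<in> I" "g \<noteq> 0"
      using G g(1) unfolding reduced_GB_def by auto
    then have "lt (elim_ord Z) g \<in> Poly_Mapping.keys g" "g \<in> maxideal n"
      using lt_greatest_key ideal_subset_Pn[OF ideal] maximal by blast+
    then have "lt (elim_ord Z) g \<noteq> 0"
      unfolding maxideal_def by (auto simp: in_keys_iff)
    then have "lt (elim_ord Z) g = Poly_Mapping.single z 1"
      using tdvd_var g(2) by blast
    then show ?thesis
      unfolding LI_def using g(1) by force
  qed
  moreover have "(\<lambda>g. (lt (elim_ord Z) g, g)) ` G \<in> GFan n I"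
    unfolding GFan_def using term_ordering_elim_ord G by blast
  ultimately show ?thesis
    by blast
qed

section \<open>The separating embedding dimension\<close>

definition max_sep_card :: "nat \<Rightarrow> 'a::field mpoly set \<Rightarrow> nat" where
  "max_sep_card n I = Max {card Z | Z. Z \<subseteq> {..<n} \<and> has_sep_tuple n I Z}"

lemma sepdim_eq: "sepdim n I = n - max_sep_card n I"
  unfolding sepdim_def max_sep_card_def ..

lemma max_sep_card:
  shows max_sep_card_ge: "has_sep_tuple n I Z \<Longrightarrow> card Z \<le> max_sep_card n I"
    and max_sep_card_attained: "\<exists>Z. has_sep_tuple n I Z \<and> card Z = max_sep_card n I"
    and max_sep_card_le: "max_sep_card n I \<le> n"
proof -
  let ?S = "{card Z | Z. Z \<subseteq> {..<n} \<and> has_sep_tuple n I Z}"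
  have S_le_n: "?S \<subseteq> {..n}"
    using card_mono[of "{..<n}"] by auto
  then have "finite ?S"
    using finite_subset by blast
  moreover have "has_sep_tuple n I {}"
    unfolding has_sep_tuple_def coherently_separating_def by simp
  then have "?S \<noteq> {}"
    by blast
  ultimately have in_S: "max_sep_card n I \<in> ?S" and greatest: "\<forall>k\<in>?S. k \<le> max_sep_card n I"
    unfolding max_sep_card_def using Max_in Max_ge by blast+
  show "has_sep_tuple n I Z \<Longrightarrow> card Z \<le> max_sep_card n I"
    using greatest has_sep_tuple_subset by blast
  show "\<exists>Z. has_sep_tuple n I Z \<and> card Z = max_sep_card n I"
    using in_S by auto
  show "max_sep_card n I \<le> n"
    using in_S S_le_n by auto
qed

lemma card_LI_le_max_sep_card:
  assumes "is_ideal n I" "I \<subseteq> maxideal n" "Gb \<in> GFan n I"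
  shows "card (LI Gb) \<le> max_sep_card n I"
  using max_sep_card_ge has_sep_tuple_LI[OF assms] .

lemma Max_card_LI_eq_max_sep_card:
  assumes ideal: "is_ideal n I" and maximal: "I \<subseteq> maxideal n"
  shows "Max ((\<lambda>G. card (LI G)) ` GFan n I) = max_sep_card n I"
proof -
  have bound: "(\<lambda>G. card (LI G)) ` GFan n I \<subseteq> {..max_sep_card n I}"
    using card_LI_le_max_sep_card[OF ideal maximal] by auto
  obtain Z where Z: "has_sep_tuple n I Z" "card Z = max_sep_card n I"
    using max_sep_card_attained by blast
  then obtain Gb where Gb: "Gb \<in> GFan n I" "Z \<subseteq> LI Gb"
    using GFan_LI_superset[OF ideal maximal] by blast
  have "finite (LI Gb)"
    using has_sep_tuple_subset[OF has_sep_tuple_LI[OF ideal maximal Gb(1)]] finite_subset by blast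
  then have "card Z \<le> card (LI Gb)"
    using card_mono Gb(2) by blast
  then have "card (LI Gb) = max_sep_card n I"
    using Z(2) card_LI_le_max_sep_card[OF ideal maximal Gb(1)] by linarith
  then have "max_sep_card n I \<in> (\<lambda>G. card (LI G)) ` GFan n I"
    using Gb(1) by (metis image_eqI)
  moreover have "finite ((\<lambda>G. card (LI G)) ` GFan n I)"
    using finite_subset[OF bound] by blast
  ultimately show ?thesis
    using bound by (intro Max_eqI) auto
qed

lemma optimal_sep_reembedding_if_max_sep_card:
  "has_sep_tuple n I Z \<Longrightarrow> card Z = max_sep_card n I \<Longrightarrow> optimal_sep_reembedding n I Z"
  unfolding optimal_sep_reembedding_def by (simp add: max_sep_card_ge)

theorem proposition3p6:
  fixes n :: nat and I :: "('a::field) mpoly set"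
  assumes "is_ideal n I" and "I \<subseteq> maxideal n"
  shows "(\<forall>Gb\<in>GFan n I. sepdim n I \<le> n - card (LI Gb))
    \<and> (\<forall>Gb\<in>GFan n I. sepdim n I = n - card (LI Gb)
          \<longleftrightarrow> card (LI Gb) = Max ((\<lambda>G. card (LI G)) ` GFan n I))
    \<and> (\<forall>Gb\<in>GFan n I. card (LI Gb) = Max ((\<lambda>G. card (LI G)) ` GFan n I)
          \<longrightarrow> optimal_sep_reembedding n I (LI Gb))"
proof (intro conjI ballI impI)
  fix Gb assume Gb: "Gb \<in> GFan n I"
  have "card (LI Gb) \<le> max_sep_card n I" "max_sep_card n I \<le> n"
    using card_LI_le_max_sep_card[OF assms Gb] max_sep_card_le .
  then show "sepdim n I \<le> n - card (LI Gb)"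
    and "sepdim n I = n - card (LI Gb) \<longleftrightarrow> card (LI Gb) = Max ((\<lambda>G. card (LI G)) ` GFan n I)"
    unfolding sepdim_eq Max_card_LI_eq_max_sep_card[OF assms] by arith+
  show "optimal_sep_reembedding n I (LI Gb)"
    if "card (LI Gb) = Max ((\<lambda>G. card (LI G)) ` GFan n I)"
    using optimal_sep_reembedding_if_max_sep_card[OF has_sep_tuple_LI[OF assms Gb]] that
    unfolding Max_card_LI_eq_max_sep_card[OF assms] .
qed

end
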